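(* Let $\mathcal{D}=\mathcal{P}_{\mathcal{D}}\cup\mathcal{L}_{\mathcal{D}}$ be a dominating set of the incidence graph of an arbitrary projective plane $\Pi_q$ of order $q$, and let $c$ be the maximum, over all points $P$, of $|[P]\cap\mathcal{L}_{\mathcal{D}}|$. Suppose that $|\mathcal{L}_{\mathcal{D}}|+2-q\leq c\leq q-1$. Then $|\mathcal{L}_{\mathcal{D}}|\geq 4q-2-|\mathcal{D}|$.
   Context: A dominating set $\mathcal{D}=\mathcal{P}_{\mathcal{D}}\cup\mathcal{L}_{\mathcal{D}}$ of the incidence graph of $\Pi_q$ is a set of points $\mathcal{P}_{\mathcal{D}}$ and lines $\mathcal{L}_{\mathcal{D}}$ such that every point not in $\mathcal{P}_{\mathcal{D}}$ lies on a line of $\mathcal{L}_{\mathcal{D}}$ and every line not in $\mathcal{L}_{\mathcal{D}}$ contains a point of $\mathcal{P}_{\mathcal{D}}$. $[P]$ is the set of lines through $P$. *)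

theory Defs
  imports Main
begin

definition projective_plane ::
  "'p set \<Rightarrow> 'l set \<Rightarrow> ('p \<Rightarrow> 'l \<Rightarrow> bool) \<Rightarrow> nat \<Rightarrow> bool" where
  "projective_plane Pts Lns inc q \<longleftrightarrow>
     finite Pts \<and> finite Lns \<and>
     (\<forall>P\<in>Pts. \<forall>Q\<in>Pts. P \<noteq> Q \<longrightarrow> (\<exists>!l. l \<in> Lns \<and> inc P l \<and> inc Q l)) \<and>
     (\<forall>l\<in>Lns. \<forall>m\<in>Lns. l \<noteq> m \<longrightarrow> (\<exists>!P. P \<in> Pts \<and> inc P l \<and> inc P m)) \<and>
     (\<exists>A\<in>Pts. \<exists>B\<in>Pts. \<exists>C\<in>Pts. \<exists>D\<in>Pts. distinct [A, B, C, D] \<and>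
        (\<forall>X\<in>{A,B,C,D}. \<forall>Y\<in>{A,B,C,D}. \<forall>Z\<in>{A,B,C,D}. distinct [X, Y, Z] \<longrightarrow>
           \<not> (\<exists>l\<in>Lns. inc X l \<and> inc Y l \<and> inc Z l))) \<and>
     (\<forall>l\<in>Lns. card {P \<in> Pts. inc P l} = q + 1)"

definition pencil :: "'l set \<Rightarrow> ('p \<Rightarrow> 'l \<Rightarrow> bool) \<Rightarrow> 'p \<Rightarrow> 'l set" where
  "pencil Lns inc P = {l \<in> Lns. inc P l}"

definition dominating_set ::
  "'p set \<Rightarrow> 'l set \<Rightarrow> ('p \<Rightarrow> 'l \<Rightarrow> bool) \<Rightarrow> 'p set \<Rightarrow> 'l set \<Rightarrow> bool" where
  "dominating_set Pts Lns inc PD LD \<longleftrightarrow>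
     PD \<subseteq> Pts \<and> LD \<subseteq> Lns \<and>
     (\<forall>P\<in>Pts - PD. \<exists>l\<in>LD. inc P l) \<and>
     (\<forall>l\<in>Lns - LD. \<exists>P\<in>PD. inc P l)"

end

theory Submission
  imports Defs
begin

text \<open>Let \<open>P\<close> be a point whose pencil meets \<open>L\<^sub>D\<close> in \<open>c\<close> lines. The pencil has \<open>q + 1\<close> lines, so
  at least \<open>s = q + 1 - c\<close> of them avoid \<open>L\<^sub>D\<close> and must therefore be dominated by points.
  On such a line \<open>l\<close>, every point \<open>X \<noteq> P\<close> outside \<open>P\<^sub>D\<close> lies on a line of \<open>L\<^sub>D\<close>, necessarily
  missing \<open>P\<close>, and distinct points need distinct lines; only \<open>|L\<^sub>D| - c\<close> such lines exist,
  so \<open>l - {P}\<close> contains at least \<open>b = q + c - |L\<^sub>D|\<close> points of \<open>P\<^sub>D\<close>. The sets \<open>l - {P}\<close> are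
  disjoint, hence \<open>s b \<le> |P\<^sub>D|\<close>, and the hypotheses say \<open>s, b \<ge> 2\<close>, so
  \<open>s b \<ge> 2s + 2b - 4 = 4q - 2 - 2|L\<^sub>D|\<close>.\<close>

definition points_on :: "'p set \<Rightarrow> ('p \<Rightarrow> 'l \<Rightarrow> bool) \<Rightarrow> 'l \<Rightarrow> 'p set" where
  "points_on Pts inc l = {X \<in> Pts. inc X l}"

definition join :: "'l set \<Rightarrow> ('p \<Rightarrow> 'l \<Rightarrow> bool) \<Rightarrow> 'p \<Rightarrow> 'p \<Rightarrow> 'l" where
  "join Lns inc P Q = (THE l. l \<in> Lns \<and> inc P l \<and> inc Q l)"

context
  fixes Pts :: "'p set" and Lns :: "'l set" and inc :: "'p \<Rightarrow> 'l \<Rightarrow> bool" and q :: nat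
  assumes plane: "projective_plane Pts Lns inc q"
begin

lemma finite_points: "finite Pts"
  and finite_lines: "finite Lns"
  and card_points_on: "l \<in> Lns \<Longrightarrow> card (points_on Pts inc l) = q + 1"
  using plane unfolding projective_plane_def points_on_def by auto

lemma line_through_two_points:
  assumes "P \<in> Pts" "Q \<in> Pts" "P \<noteq> Q"
  shows "\<exists>!l. l \<in> Lns \<and> inc P l \<and> inc Q l"
  using plane assms unfolding projective_plane_def by blast

lemma point_on_two_lines:
  assumes "l \<in> Lns" "m \<in> Lns" "l \<noteq> m"
  shows "\<exists>P. P \<in> Pts \<and> inc P l \<and> inc P m"
  using plane assms unfolding projective_plane_def by blast

lemma line_unique:
  assumes "P \<in> Pts" "Q \<in> Pts" "P \<noteq> Q"
    and "l \<in> Lns" "inc P l" "inc Q l" "k \<in> Lns" "inc P k" "inc Q k"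
  shows "l = k"
  using line_through_two_points[OF assms(1-3)] assms(4-) by blast

lemma join_incident:
  assumes "P \<in> Pts" "Q \<in> Pts" "P \<noteq> Q"
  shows "join Lns inc P Q \<in> Lns" "inc P (join Lns inc P Q)" "inc Q (join Lns inc P Q)"
  using theI'[OF line_through_two_points[OF assms]] unfolding join_def by auto

lemma join_eqI:
  assumes "P \<in> Pts" "Q \<in> Pts" "P \<noteq> Q" "l \<in> Lns" "inc P l" "inc Q l"
  shows "join Lns inc P Q = l"
  using line_unique[OF assms(1-3) join_incident[OF assms(1-3)]] assms(4-) by blast

lemma quadrangle:
  "\<exists>A\<in>Pts. \<exists>B\<in>Pts. \<exists>C\<in>Pts. \<exists>D\<in>Pts. distinct [A, B, C, D] \<and>
     (\<forall>X\<in>{A,B,C,D}. \<forall>Y\<in>{A,B,C,D}. \<forall>Z\<in>{A,B,C,D}. distinct [X, Y, Z] \<longrightarrow>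
        \<not> (\<exists>l\<in>Lns. inc X l \<and> inc Y l \<and> inc Z l))"
  using plane unfolding projective_plane_def by (elim conjE)

lemma points_nonempty: "Pts \<noteq> {}"
  using quadrangle by (elim bexE) blast

lemma ex_line_not_through:
  assumes P: "P \<in> Pts"
  shows "\<exists>m\<in>Lns. \<not> inc P m"
proof (rule ccontr)
  assume all_through: "\<not> (\<exists>m\<in>Lns. \<not> inc P m)"
  from quadrangle obtain A B C D where ABCD: "A \<in> Pts" "B \<in> Pts" "C \<in> Pts" "D \<in> Pts" "distinct [A, B, C, D]"
    and noncollinear: "\<forall>X\<in>{A,B,C,D}. \<forall>Y\<in>{A,B,C,D}. \<forall>Z\<in>{A,B,C,D}. distinct [X, Y, Z] \<longrightarrow>
         \<not> (\<exists>l\<in>Lns. inc X l \<and> inc Y l \<and> inc Z l)"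
    by (elim bexE conjE) (rule that, assumption+)
  let ?AB = "join Lns inc A B" and ?AC = "join Lns inc A C" and ?CD = "join Lns inc C D"
  have AB: "?AB \<in> Lns" "inc A ?AB" "inc B ?AB"
    and AC: "?AC \<in> Lns" "inc A ?AC" "inc C ?AC"
    and CD: "?CD \<in> Lns" "inc C ?CD" "inc D ?CD"
    using join_incident ABCD by auto
  have "?AB \<noteq> ?AC"
    using noncollinear[rule_format, of A B C] AB AC ABCD(5) by auto
  then have "P = A"
    using line_unique[OF P ABCD(1) _ AB(1) _ AB(2) AC(1) _ AC(2)] all_through AB(1) AC(1) by blast
  then show False
    using noncollinear[rule_format, of A C D] all_through CD ABCD(5) by auto
qed

text \<open>Projecting the \<open>q + 1\<close> points of a line \<open>m\<close> missing \<open>P\<close> from \<open>P\<close> is a bijection onto \<open>[P]\<close>.\<close>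

lemma card_pencil:
  assumes P: "P \<in> Pts"
  shows "card (pencil Lns inc P) = q + 1"
proof -
  obtain m where m: "m \<in> Lns" "\<not> inc P m"
    using ex_line_not_through[OF P] by blast
  have on_m: "X \<in> Pts" "P \<noteq> X" "inc X m" if "X \<in> points_on Pts inc m" for X
    using that m(2) unfolding points_on_def by auto
  have "bij_betw (join Lns inc P) (points_on Pts inc m) (pencil Lns inc P)"
  proof (rule bij_betw_imageI)
    show "inj_on (join Lns inc P) (points_on Pts inc m)"
    proof (rule inj_onI, rule ccontr)
      fix X Y
      assume X: "X \<in> points_on Pts inc m" and Y: "Y \<in> points_on Pts inc m"
        and same: "join Lns inc P X = join Lns inc P Y" and "X \<noteq> Y"
      have "inc Y (join Lns inc P X)"
        using join_incident(3)[OF P on_m(1,2)[OF Y]] same by simp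
      then have "join Lns inc P X = m"
        using line_unique[OF on_m(1)[OF X] on_m(1)[OF Y] \<open>X \<noteq> Y\<close>]
          join_incident(1,3)[OF P on_m(1,2)[OF X]] m(1) on_m(3)[OF X] on_m(3)[OF Y]
        by blast
      then show False
        using join_incident(2)[OF P on_m(1,2)[OF X]] m(2) by simp
    qed
    show "join Lns inc P ` points_on Pts inc m = pencil Lns inc P"
    proof (intro equalityI subsetI)
      fix l
      assume "l \<in> join Lns inc P ` points_on Pts inc m"
      then show "l \<in> pencil Lns inc P"
        using join_incident(1,2)[OF P] on_m unfolding pencil_def by auto
    next
      fix l
      assume "l \<in> pencil Lns inc P"
      then have l: "l \<in> Lns" "inc P l" and "l \<noteq> m"
        using m unfolding pencil_def by auto
      then obtain X where X: "X \<in> Pts" "inc X l" "inc X m"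
        using point_on_two_lines m(1) by blast
      then have "P \<noteq> X"
        using m(2) by blast
      then have "l = join Lns inc P X"
        using join_eqI[OF P X(1) _ l X(2)] by simp
      then show "l \<in> join Lns inc P ` points_on Pts inc m"
        using X unfolding points_on_def by blast
    qed
  qed
  then show ?thesis
    using bij_betw_same_card card_points_on[OF m(1)] by metis
qed

lemma sum_card_punctured_lines_le:
  assumes P: "P \<in> Pts" and F: "F \<subseteq> pencil Lns inc P" and A: "A \<subseteq> Pts" "finite A"
  shows "(\<Sum>l\<in>F. card (points_on Pts inc l \<inter> A - {P})) \<le> card A"
proof -
  have "finite F"
    using F finite_subset[OF _ finite_lines] unfolding pencil_def by blast
  have "(\<Sum>l\<in>F. card (points_on Pts inc l \<inter> A - {P})) = card (\<Union>l\<in>F. points_on Pts inc l \<inter> A - {P})"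
  proof (rule card_UN_disjoint[symmetric, OF \<open>finite F\<close>])
    show "\<forall>l\<in>F. finite (points_on Pts inc l \<inter> A - {P})"
      using A(2) by blast
    show "\<forall>l\<in>F. \<forall>k\<in>F. l \<noteq> k \<longrightarrow> (points_on Pts inc l \<inter> A - {P}) \<inter> (points_on Pts inc k \<inter> A - {P}) = {}"
    proof (intro ballI impI equals0I)
      fix l k X
      assume "l \<in> F" "k \<in> F" "l \<noteq> k"
        and "X \<in> (points_on Pts inc l \<inter> A - {P}) \<inter> (points_on Pts inc k \<inter> A - {P})"
      then have "X \<in> Pts" "P \<noteq> X" "inc X l" "inc X k" "l \<in> Lns" "k \<in> Lns" "inc P l" "inc P k"
        using F unfolding pencil_def points_on_def by auto
      then show False
        using line_unique[OF P, of X l k] \<open>l \<noteq> k\<close> by blast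
    qed
  qed
  also have "\<dots> \<le> card A"
    using A(2) by (intro card_mono) auto
  finally show ?thesis .
qed

text \<open>A line outside \<open>L\<^sub>D\<close> through \<open>P\<close>: its points \<open>\<noteq> P\<close> outside \<open>P\<^sub>D\<close> are covered by pairwise distinct
  lines of \<open>L\<^sub>D\<close> that miss \<open>P\<close>.\<close>

lemma dominated_line_bound:
  assumes dom: "dominating_set Pts Lns inc PD LD" and P: "P \<in> Pts"
    and l: "l \<in> Lns" "l \<notin> LD" "inc P l"
  shows "q \<le> card (points_on Pts inc l \<inter> PD - {P}) + card (LD - pencil Lns inc P)"
proof -
  let ?U = "points_on Pts inc l - PD - {P}"
  have LD: "LD \<subseteq> Lns" "finite LD"
    using dom finite_subset[OF _ finite_lines] unfolding dominating_set_def by blast+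
  have U: "Y \<in> Pts" "Y \<noteq> P" "inc Y l" "\<exists>k. k \<in> LD \<and> inc Y k" if "Y \<in> ?U" for Y
    using that dom unfolding dominating_set_def points_on_def by auto
  define cover where "cover Y = (SOME k. k \<in> LD \<and> inc Y k)" for Y
  have cover: "cover Y \<in> LD" "inc Y (cover Y)" "cover Y \<in> Lns" "cover Y \<noteq> l" if "Y \<in> ?U" for Y
    using someI_ex[OF U(4)[OF that]] LD(1) l(2) unfolding cover_def by auto
  have fin: "finite (points_on Pts inc l)"
    using finite_points unfolding points_on_def by simp
  have "card ?U \<le> card (LD - pencil Lns inc P)"
  proof (rule card_inj_on_le)
    show "inj_on cover ?U"
    proof (rule inj_onI, rule ccontr)
      fix Y Z
      assume Y: "Y \<in> ?U" and Z: "Z \<in> ?U" and "cover Y = cover Z" "Y \<noteq> Z"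
      then have "cover Y = l"
        using line_unique[OF U(1)[OF Y] U(1)[OF Z] \<open>Y \<noteq> Z\<close> cover(3,2)[OF Y] _ l(1) U(3)[OF Y] U(3)[OF Z]]
          cover(2)[OF Z] by simp
      then show False
        using cover(4)[OF Y] by simp
    qed
    show "cover ` ?U \<subseteq> LD - pencil Lns inc P"
    proof (rule image_subsetI)
      fix Y
      assume Y: "Y \<in> ?U"
      have "\<not> inc P (cover Y)"
        using line_unique[OF P U(1)[OF Y] _ cover(3)[OF Y] _ cover(2)[OF Y] l(1,3) U(3)[OF Y]]
          U(2)[OF Y] cover(4)[OF Y] by auto
      then show "cover Y \<in> LD - pencil Lns inc P"
        using cover(1)[OF Y] unfolding pencil_def by simp
    qed
  qed (use LD in simp)
  moreover have "card ((points_on Pts inc l \<inter> PD - {P}) \<union> ?U) = card (points_on Pts inc l \<inter> PD - {P}) + card ?U"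
    using fin by (intro card_Un_disjoint) auto
  moreover have "(points_on Pts inc l \<inter> PD - {P}) \<union> ?U = points_on Pts inc l - {P}"
    by blast
  then have "card ((points_on Pts inc l \<inter> PD - {P}) \<union> ?U) = q"
    using card_points_on[OF l(1)] P l(3) unfolding points_on_def by simp
  ultimately show ?thesis
    by linarith
qed

lemma dominating_set_card_points_ge:
  assumes dom: "dominating_set Pts Lns inc PD LD" and P: "P \<in> Pts"
  shows "card (pencil Lns inc P - LD) * (q + card (pencil Lns inc P \<inter> LD) - card LD) \<le> card PD"
proof -
  let ?F = "pencil Lns inc P - LD" and ?c = "card (pencil Lns inc P \<inter> LD)"
  have PD: "PD \<subseteq> Pts" "finite PD" and LD: "finite LD"
    using dom finite_subset[OF _ finite_points] finite_subset[OF _ finite_lines]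
    unfolding dominating_set_def by blast+
  have "card (LD - pencil Lns inc P) = card LD - ?c"
    using LD card_Diff_subset_Int[of LD "pencil Lns inc P"] by (simp add: Int_commute)
  moreover have "?c \<le> card LD"
    using card_mono[OF LD] by simp
  moreover have "l \<in> Lns" "l \<notin> LD" "inc P l" if "l \<in> ?F" for l
    using that unfolding pencil_def by auto
  ultimately have "q + ?c - card LD \<le> card (points_on Pts inc l \<inter> PD - {P})" if "l \<in> ?F" for l
    using dominated_line_bound[OF dom P, of l] that by force
  then have "card ?F * (q + ?c - card LD) \<le> (\<Sum>l\<in>?F. card (points_on Pts inc l \<inter> PD - {P}))"
    using sum_mono[of ?F "\<lambda>_. q + ?c - card LD"] by simp
  also have "\<dots> \<le> card PD"
    using sum_card_punctured_lines_le[OF P _ PD] by blast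
  finally show ?thesis .
qed

end

lemma product_ge_of_ge_two:
  fixes s b :: int
  assumes "2 \<le> s" "2 \<le> b"
  shows "2 * s + 2 * b - 4 \<le> s * b"
proof -
  have "0 \<le> (s - 2) * (b - 2)"
    using assms by (intro mult_nonneg_nonneg) auto
  then show ?thesis
    by (simp add: algebra_simps)
qed

theorem lemma4:
  fixes Pts :: "'p set" and Lns :: "'l set" and inc :: "'p \<Rightarrow> 'l \<Rightarrow> bool"
    and q :: nat and PD :: "'p set" and LD :: "'l set" and c :: nat
  assumes "projective_plane Pts Lns inc q"
    and "dominating_set Pts Lns inc PD LD"
    and "c = Max ((\<lambda>P. card (pencil Lns inc P \<inter> LD)) ` Pts)"
    and "int (card LD) + 2 - int q \<le> int c"
    and "int c \<le> int q - 1"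
  shows "int (card LD) \<ge> 4 * int q - 2 - (int (card PD) + int (card LD))"
proof -
  note plane = assms(1)
  have "c \<in> (\<lambda>P. card (pencil Lns inc P \<inter> LD)) ` Pts"
    unfolding assms(3) using finite_points[OF plane] points_nonempty[OF plane] by (intro Max_in) auto
  then obtain P where P: "P \<in> Pts" and cP: "card (pencil Lns inc P \<inter> LD) = c"
    by blast
  have "card (pencil Lns inc P) = c + card (pencil Lns inc P - LD)"
    using cP finite_lines[OF plane] card_Int_Diff[of "pencil Lns inc P" LD]
    unfolding pencil_def by simp
  then have "int (card (pencil Lns inc P - LD)) = int q + 1 - int c"
    using card_pencil[OF plane P] by simp
  moreover have "int (q + c - card LD) = int q + int c - int (card LD)"
    using assms(4) by simp
  ultimately have "(int q + 1 - int c) * (int q + int c - int (card LD)) \<le> int (card PD)"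
    using dominating_set_card_points_ge[OF plane assms(2) P, unfolded cP]
    by (metis of_nat_le_iff of_nat_mult)
  moreover have "4 * int q - 2 - 2 * int (card LD) \<le> (int q + 1 - int c) * (int q + int c - int (card LD))"
    using product_ge_of_ge_two[of "int q + 1 - int c" "int q + int c - int (card LD)"] assms(4,5)
    by simp
  ultimately show ?thesis
    by linarith
qed

end
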